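(* Let $(\alpha_n)_{n\ge0}$ be complex numbers with $|\alpha_n|<1$ and notation as in the context. For every integer $m$ and nonnegative integer $n$, \[ \det\left(\mu_{m+i-j}\right)_{0\le i,j\le n}=\prod_{k=0}^{n-1}(1-|\alpha_k|^2)^{n-k}\cdot\det\left(\mu_{m+i,j}\right)_{0\le i,j\le n}, \] where $\mu_{a,j}=\langle\Phi_j(z),z^a\rangle/\langle\Phi_j(z),\Phi_j(z)\rangle$ for integers $a$ and $j\ge0$, and the product is $1$ when $n=0$.
   Context: For a polynomial $f(z)=\sum_{k=0}^n a_kz^k$ of degree $n$, write $\overline{f}(z)=\sum_k\overline{a_k}z^k$ and $f^*(z)=z^n\overline{f}(1/z)$. Define monic $\Phi_n$ by $\Phi_0=1$, $\Phi_{n+1}(z)=z\Phi_n(z)-\overline{\alpha_n}\Phi_n^*(z)$. Let $\mathcal{L}$ be the unique linear functional on the space of Laurent polynomials with $\mathcal{L}(1)=1$ and $\mathcal{L}(\Phi_m(z)\overline{\Phi_n}(1/z))=0$ for $m\ne n$ (for a Laurent polynomial $g$, $\overline{g}$ conjugates all coefficients). Set $\langle f,g\rangle=\mathcal{L}(f(z)\overline{g}(1/z))$ and $\mu_k=\mathcal{L}(z^{-k})$ for integers $k$. *)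

theory Defs
  imports "HOL-Computational_Algebra.Polynomial" "Jordan_Normal_Form.Determinant"
begin

text \<open>Laurent polynomials are represented by their coefficient functions
  \<open>int \<Rightarrow> complex\<close> with finite support.\<close>

definition laurent :: "(int \<Rightarrow> complex) \<Rightarrow> bool" where
  "laurent g \<longleftrightarrow> finite {k. g k \<noteq> 0}"

definition lin_functional :: "((int \<Rightarrow> complex) \<Rightarrow> complex) \<Rightarrow> bool" where
  "lin_functional L \<longleftrightarrow>
     (\<forall>a f g. laurent f \<longrightarrow> laurent g \<longrightarrow>
        L (\<lambda>k. a * f k + g k) = a * L f + L g)"

definition zpow :: "int \<Rightarrow> int \<Rightarrow> complex" where
  "zpow a = (\<lambda>k. if k = a then 1 else 0)"

definition lp_of_poly :: "complex poly \<Rightarrow> int \<Rightarrow> complex" where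
  "lp_of_poly p = (\<lambda>k. if k \<ge> 0 then coeff p (nat k) else 0)"

text \<open>The Laurent polynomial \<open>f(z) \<cdot> conj-coeff(g)(1/z)\<close>.\<close>
definition lpair :: "(int \<Rightarrow> complex) \<Rightarrow> (int \<Rightarrow> complex) \<Rightarrow> int \<Rightarrow> complex" where
  "lpair f g = (\<lambda>k. \<Sum>i\<in>{i. f i \<noteq> 0}. \<Sum>j\<in>{j. g j \<noteq> 0}.
                     if i - j = k then f i * cnj (g j) else 0)"

definition lip :: "((int \<Rightarrow> complex) \<Rightarrow> complex) \<Rightarrow> (int \<Rightarrow> complex) \<Rightarrow> (int \<Rightarrow> complex) \<Rightarrow> complex" where
  "lip L f g = L (lpair f g)"

text \<open>\<open>f^*(z) = z^n \<bar>f(1/z)\<close> with \<open>n = deg f\<close>.\<close>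
definition pstar :: "complex poly \<Rightarrow> complex poly" where
  "pstar p = map_poly cnj (reflect_poly p)"

fun Phi :: "(nat \<Rightarrow> complex) \<Rightarrow> nat \<Rightarrow> complex poly" where
  "Phi \<alpha> 0 = 1"
| "Phi \<alpha> (Suc n) = [:0, 1:] * Phi \<alpha> n - smult (cnj (\<alpha> n)) (pstar (Phi \<alpha> n))"

definition mom :: "((int \<Rightarrow> complex) \<Rightarrow> complex) \<Rightarrow> int \<Rightarrow> complex" where
  "mom L k = L (zpow (- k))"

definition mom2 :: "((int \<Rightarrow> complex) \<Rightarrow> complex) \<Rightarrow> (nat \<Rightarrow> complex) \<Rightarrow> int \<Rightarrow> nat \<Rightarrow> complex" where
  "mom2 L \<alpha> a j = lip L (lp_of_poly (Phi \<alpha> j)) (zpow a) /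
                   lip L (lp_of_poly (Phi \<alpha> j)) (lp_of_poly (Phi \<alpha> j))"

definition is_OPUC_functional :: "(nat \<Rightarrow> complex) \<Rightarrow> ((int \<Rightarrow> complex) \<Rightarrow> complex) \<Rightarrow> bool" where
  "is_OPUC_functional \<alpha> L \<longleftrightarrow> lin_functional L \<and> L (zpow 0) = 1 \<and>
     (\<forall>m n. m \<noteq> n \<longrightarrow> L (lpair (lp_of_poly (Phi \<alpha> m)) (lp_of_poly (Phi \<alpha> n))) = 0)"

end

theory Submission
  imports Defs
begin

text \<open>Multiplying the Toeplitz matrix \<open>(\<mu>(m+i-j))\<close> on the right by the unitriangular
  matrix whose columns are the coefficient vectors of \<open>\<Phi>\<^sub>0, \<dots>, \<Phi>\<^sub>n\<close> gives the
  matrix \<open>(\<langle>\<Phi>\<^sub>j, z\<^sup>m\<^sup>+\<^sup>i\<rangle>)\<close>, whose \<open>j\<close>-th column is \<open>\<kappa>\<^sub>j = \<langle>\<Phi>\<^sub>j, \<Phi>\<^sub>j\<rangle>\<close> times the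
  \<open>j\<close>-th column of \<open>(\<mu>(m+i,j))\<close>. So the two determinants differ by the factor
  \<open>\<kappa>\<^sub>0 \<cdots> \<kappa>\<^sub>n\<close>, which Szego's recursion \<open>\<kappa>\<^sub>k\<^sub>+\<^sub>1 = (1 - |\<alpha>\<^sub>k|\<^sup>2) \<kappa>\<^sub>k\<close>, \<open>\<kappa>\<^sub>0 = 1\<close> evaluates.
  The recursion follows from \<open>\<kappa>\<^sub>k = \<langle>\<Phi>\<^sub>k, z\<^sup>k\<rangle>\<close> (orthogonality), the Toeplitz
  property \<open>\<langle>zp, zq\<rangle> = \<langle>p, q\<rangle>\<close> and the reflection identity \<open>\<langle>p\<^sup>*, q\<^sup>*\<rangle> = \<langle>q, p\<rangle>\<close>.\<close>

subsection \<open>Linear functionals and moments\<close>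

lemma lin_functional_zero:
  assumes "lin_functional L"
  shows "L (\<lambda>k. 0) = 0"
proof -
  have "laurent (\<lambda>k. 0)"
    by (simp add: laurent_def)
  then have "L (\<lambda>k. 1 * 0 + 0) = 1 * L (\<lambda>k. 0) + L (\<lambda>k. 0)"
    using assms unfolding lin_functional_def by blast
  then show ?thesis by simp
qed

lemma laurent_sum:
  assumes "finite A" "\<And>x. x \<in> A \<Longrightarrow> laurent (h x)"
  shows "laurent (\<lambda>k. \<Sum>x\<in>A. c x * h x k)"
proof -
  have "{k. (\<Sum>x\<in>A. c x * h x k) \<noteq> 0} \<subseteq> (\<Union>x\<in>A. {k. h x k \<noteq> 0})"
    by (auto intro: ccontr simp: sum.neutral)
  moreover have "finite (\<Union>x\<in>A. {k. h x k \<noteq> 0})"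
    using assms by (auto simp: laurent_def)
  ultimately show ?thesis
    unfolding laurent_def by (rule finite_subset)
qed

lemma lin_functional_sum:
  assumes L: "lin_functional L" and "finite A" "\<And>x. x \<in> A \<Longrightarrow> laurent (h x)"
  shows "L (\<lambda>k. \<Sum>x\<in>A. c x * h x k) = (\<Sum>x\<in>A. c x * L (h x))"
  using assms(2,3)
proof (induction A rule: finite_induct)
  case empty
  then show ?case using lin_functional_zero[OF L] by simp
next
  case (insert x F)
  have "laurent (\<lambda>k. \<Sum>y\<in>F. c y * h y k)"
    using insert by (intro laurent_sum) auto
  then have "L (\<lambda>k. c x * h x k + (\<Sum>y\<in>F. c y * h y k)) =
             c x * L (h x) + L (\<lambda>k. \<Sum>y\<in>F. c y * h y k)"
    using L insert.prems unfolding lin_functional_def by blast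
  then show ?case using insert by simp
qed

lemma laurent_zpow: "laurent (zpow a)"
  unfolding laurent_def zpow_def by simp

lemma lin_functional_lpair:
  assumes L: "lin_functional L"
    and S: "finite S" "{i. f i \<noteq> 0} \<subseteq> S" and T: "finite T" "{j. g j \<noteq> 0} \<subseteq> T"
  shows "L (lpair f g) = (\<Sum>i\<in>S. \<Sum>j\<in>T. f i * cnj (g j) * mom L (j - i))"
proof -
  have fin: "finite {i. f i \<noteq> 0}" "finite {j. g j \<noteq> 0}"
    using S T finite_subset by auto
  have "lpair f g = (\<lambda>k. \<Sum>(i, j)\<in>S \<times> T. f i * cnj (g j) * zpow (i - j) k)"
  proof
    fix k
    have "lpair f g k = (\<Sum>i\<in>S. \<Sum>j\<in>{j. g j \<noteq> 0}. if i - j = k then f i * cnj (g j) else 0)"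
      unfolding lpair_def
      by (rule sum.mono_neutral_left) (use S fin in \<open>auto intro!: sum.neutral split: if_splits\<close>)
    also have "\<dots> = (\<Sum>i\<in>S. \<Sum>j\<in>T. if i - j = k then f i * cnj (g j) else 0)"
      by (intro sum.cong refl sum.mono_neutral_left) (use T fin in auto)
    finally show "lpair f g k = (\<Sum>(i, j)\<in>S \<times> T. f i * cnj (g j) * zpow (i - j) k)"
      by (auto simp: sum.cartesian_product zpow_def intro!: sum.cong)
  qed
  then have "L (lpair f g) = (\<Sum>(i, j)\<in>S \<times> T. f i * cnj (g j) * L (zpow (i - j)))"
    using lin_functional_sum[OF L, of "S \<times> T" "\<lambda>(i, j). zpow (i - j)" "\<lambda>(i, j). f i * cnj (g j)"]
      S T by (simp add: laurent_zpow split_def)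
  then show ?thesis
    by (simp add: sum.cartesian_product mom_def)
qed

lemma lp_of_poly_support:
  assumes "degree p < N"
  shows "{k. lp_of_poly p k \<noteq> 0} \<subseteq> int ` {..<N}"
proof
  fix k assume "k \<in> {k. lp_of_poly p k \<noteq> 0}"
  then have "k \<ge> 0" "coeff p (nat k) \<noteq> 0"
    by (auto simp: lp_of_poly_def split: if_splits)
  then show "k \<in> int ` {..<N}"
    using assms le_degree[of p "nat k"] by (intro image_eqI[of _ _ "nat k"]) auto
qed

lemma lip_zpow:
  assumes L: "lin_functional L" and "degree p < N"
  shows "lip L (lp_of_poly p) (zpow a) = (\<Sum>j<N. coeff p j * mom L (a - int j))"
proof -
  have "lip L (lp_of_poly p) (zpow a) =
    (\<Sum>j\<in>int ` {..<N}. \<Sum>b\<in>{a}. lp_of_poly p j * cnj (zpow a b) * mom L (b - j))"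
    unfolding lip_def
    by (rule lin_functional_lpair[OF L]) (use lp_of_poly_support assms in \<open>auto simp: zpow_def\<close>)
  then show ?thesis
    by (simp add: sum.reindex lp_of_poly_def zpow_def)
qed


subsection \<open>The inner product on polynomials\<close>

abbreviation poly_ip ::
  "((int \<Rightarrow> complex) \<Rightarrow> complex) \<Rightarrow> complex poly \<Rightarrow> complex poly \<Rightarrow> complex" where
  "poly_ip L p q \<equiv> lip L (lp_of_poly p) (lp_of_poly q)"

definition moment_form :: "(int \<Rightarrow> complex) \<Rightarrow> nat \<Rightarrow> complex poly \<Rightarrow> complex poly \<Rightarrow> complex" where
  "moment_form \<mu> N p q = (\<Sum>i<N. \<Sum>j<N. coeff p i * cnj (coeff q j) * \<mu> (int j - int i))"

lemma poly_ip_eq_moment_form: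
  assumes L: "lin_functional L" and "degree p < N" "degree q < N"
  shows "poly_ip L p q = moment_form (mom L) N p q"
proof -
  have "poly_ip L p q = (\<Sum>i\<in>int ` {..<N}. \<Sum>j\<in>int ` {..<N}.
          lp_of_poly p i * cnj (lp_of_poly q j) * mom L (j - i))"
    unfolding lip_def
    by (rule lin_functional_lpair[OF L]) (use lp_of_poly_support assms in auto)
  then show ?thesis
    unfolding moment_form_def by (simp add: sum.reindex lp_of_poly_def)
qed

lemma moment_form_add_left:
  "moment_form \<mu> N (p + q) r = moment_form \<mu> N p r + moment_form \<mu> N q r"
  unfolding moment_form_def by (simp add: distrib_right sum.distrib)

lemma moment_form_diff_left:
  "moment_form \<mu> N (p - q) r = moment_form \<mu> N p r - moment_form \<mu> N q r"
  unfolding moment_form_def by (simp add: left_diff_distrib sum_subtractf)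

lemma moment_form_smult_left: "moment_form \<mu> N (smult c p) r = c * moment_form \<mu> N p r"
  unfolding moment_form_def by (simp add: sum_distrib_left mult.assoc)

lemma moment_form_add_right:
  "moment_form \<mu> N r (p + q) = moment_form \<mu> N r p + moment_form \<mu> N r q"
  unfolding moment_form_def by (simp add: distrib_right distrib_left sum.distrib)

lemma moment_form_diff_right:
  "moment_form \<mu> N r (p - q) = moment_form \<mu> N r p - moment_form \<mu> N r q"
  unfolding moment_form_def by (simp add: left_diff_distrib right_diff_distrib sum_subtractf)

lemma moment_form_smult_right:
  "moment_form \<mu> N r (smult c p) = cnj c * moment_form \<mu> N r p"
  unfolding moment_form_def by (simp add: sum_distrib_left mult_ac)

lemma moment_form_pCons_0:
  "moment_form \<mu> (Suc N) (pCons 0 p) (pCons 0 q) = moment_form \<mu> N p q"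
  unfolding moment_form_def by (simp add: sum.lessThan_Suc_shift del: sum.lessThan_Suc)

text \<open>\<open>z\<^sup>d \<bar>p(1/z)\<close>, i.e. \<open>p\<^sup>*\<close> taken with respect to the degree bound \<open>d\<close>.\<close>
definition reflect_cnj :: "nat \<Rightarrow> complex poly \<Rightarrow> complex poly" where
  "reflect_cnj d p = (\<Sum>i\<le>d. monom (cnj (coeff p (d - i))) i)"

lemma coeff_reflect_cnj: "coeff (reflect_cnj d p) k = (if k \<le> d then cnj (coeff p (d - k)) else 0)"
  unfolding reflect_cnj_def by (simp add: coeff_sum coeff_monom)

lemma degree_reflect_cnj_le: "degree (reflect_cnj d p) \<le> d"
  by (rule degree_le) (simp add: coeff_reflect_cnj)

lemma moment_form_reflect_cnj:
  "moment_form \<mu> (Suc d) (reflect_cnj d p) (reflect_cnj d q) = moment_form \<mu> (Suc d) q p"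
proof -
  define G where "G a b = cnj (coeff p a) * coeff q b * \<mu> (int a - int b)" for a b
  have "moment_form \<mu> (Suc d) (reflect_cnj d p) (reflect_cnj d q) =
        (\<Sum>i<Suc d. \<Sum>j<Suc d. G (Suc d - Suc i) (Suc d - Suc j))"
    unfolding moment_form_def G_def by (intro sum.cong refl) (auto simp: coeff_reflect_cnj of_nat_diff)
  also have "\<dots> = (\<Sum>i<Suc d. \<Sum>j<Suc d. G (Suc d - Suc i) j)"
    by (simp only: sum.nat_diff_reindex)
  also have "\<dots> = (\<Sum>i<Suc d. \<Sum>j<Suc d. G i j)"
    by (rule sum.nat_diff_reindex)
  also have "\<dots> = (\<Sum>j<Suc d. \<Sum>i<Suc d. G i j)"
    by (rule sum.swap)
  also have "\<dots> = moment_form \<mu> (Suc d) q p"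
    unfolding moment_form_def G_def by (simp add: mult_ac)
  finally show ?thesis .
qed

lemma coeff_pstar: "coeff (pstar p) k = (if k \<le> degree p then cnj (coeff p (degree p - k)) else 0)"
  unfolding pstar_def by (simp add: coeff_map_poly coeff_reflect_poly)

lemma degree_pstar_le: "degree (pstar p) \<le> degree p"
  by (rule degree_le) (simp add: coeff_pstar)

lemma pstar_eq_reflect_cnj: "pstar p = reflect_cnj (degree p) p"
  by (rule poly_eqI) (simp add: coeff_pstar coeff_reflect_cnj)

lemma pstar_eq_reflect_cnj_pCons_0: "pstar p = reflect_cnj (Suc (degree p)) (pCons 0 p)"
  by (rule poly_eqI)
     (auto simp: coeff_pstar coeff_reflect_cnj coeff_pCons Suc_diff_le split: nat.splits)

lemma reflect_cnj_monom_1: "reflect_cnj n (monom 1 n) = 1"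
  by (rule poly_eqI) (auto simp: coeff_reflect_cnj coeff_monom coeff_1)

lemma reflect_cnj_1: "reflect_cnj n 1 = monom 1 n"
  by (rule poly_eqI) (auto simp: coeff_reflect_cnj coeff_monom coeff_1)

context
  fixes L :: "(int \<Rightarrow> complex) \<Rightarrow> complex"
  assumes L: "lin_functional L"
begin

lemma poly_ip_add_left: "poly_ip L (p + q) r = poly_ip L p r + poly_ip L q r"
  using poly_ip_eq_moment_form[OF L, of _ "Suc (degree p + degree q + degree r)"]
    degree_add_le_max[of p q] by (simp add: moment_form_add_left)

lemma poly_ip_diff_left: "poly_ip L (p - q) r = poly_ip L p r - poly_ip L q r"
  using poly_ip_eq_moment_form[OF L, of _ "Suc (degree p + degree q + degree r)"]
    degree_diff_le_max[of p q] by (simp add: moment_form_diff_left)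

lemma poly_ip_smult_left: "poly_ip L (smult c p) r = c * poly_ip L p r"
  using poly_ip_eq_moment_form[OF L, of _ "Suc (degree p + degree r)"]
    degree_smult_le[of c p] by (simp add: moment_form_smult_left)

lemma poly_ip_add_right: "poly_ip L r (p + q) = poly_ip L r p + poly_ip L r q"
  using poly_ip_eq_moment_form[OF L, of _ "Suc (degree p + degree q + degree r)"]
    degree_add_le_max[of p q] by (simp add: moment_form_add_right)

lemma poly_ip_diff_right: "poly_ip L r (p - q) = poly_ip L r p - poly_ip L r q"
  using poly_ip_eq_moment_form[OF L, of _ "Suc (degree p + degree q + degree r)"]
    degree_diff_le_max[of p q] by (simp add: moment_form_diff_right)

lemma poly_ip_smult_right: "poly_ip L r (smult c p) = cnj c * poly_ip L r p"
  using poly_ip_eq_moment_form[OF L, of _ "Suc (degree p + degree r)"]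
    degree_smult_le[of c p] by (simp add: moment_form_smult_right)

lemma poly_ip_zero_left: "poly_ip L 0 r = 0"
  using poly_ip_smult_left[of 0 0 r] by simp

lemma poly_ip_zero_right: "poly_ip L r 0 = 0"
  using poly_ip_smult_right[of r 0 0] by simp

lemma poly_ip_pCons_0: "poly_ip L (pCons 0 p) (pCons 0 q) = poly_ip L p q"
  using poly_ip_eq_moment_form[OF L, of _ "Suc (Suc (degree p + degree q))"]
    poly_ip_eq_moment_form[OF L, of _ "Suc (degree p + degree q)"]
  by (simp add: moment_form_pCons_0)

lemma poly_ip_reflect_cnj:
  assumes "degree p \<le> d" "degree q \<le> d"
  shows "poly_ip L (reflect_cnj d p) (reflect_cnj d q) = poly_ip L q p"
  using poly_ip_eq_moment_form[OF L, of _ "Suc d"] degree_reflect_cnj_le[of d] assms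
  by (simp add: moment_form_reflect_cnj le_imp_less_Suc)

lemma poly_ip_pstar_monom:
  "poly_ip L (pstar p) (monom 1 (Suc (degree p))) = poly_ip L 1 (pCons 0 p)"
proof -
  have "poly_ip L (pstar p) (monom 1 (Suc (degree p))) =
        poly_ip L (reflect_cnj (Suc (degree p)) (pCons 0 p)) (reflect_cnj (Suc (degree p)) 1)"
    by (simp add: pstar_eq_reflect_cnj_pCons_0[of p] reflect_cnj_1)
  also have "\<dots> = poly_ip L 1 (pCons 0 p)"
    by (rule poly_ip_reflect_cnj) auto
  finally show ?thesis .
qed

lemma poly_ip_1_pstar: "poly_ip L 1 (pstar p) = poly_ip L p (monom 1 (degree p))"
proof -
  have "poly_ip L 1 (pstar p) =
        poly_ip L (reflect_cnj (degree p) (monom 1 (degree p))) (reflect_cnj (degree p) p)"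
    by (simp add: pstar_eq_reflect_cnj[of p] reflect_cnj_monom_1)
  also have "\<dots> = poly_ip L p (monom 1 (degree p))"
    by (rule poly_ip_reflect_cnj) (simp_all add: degree_monom_eq)
  finally show ?thesis .
qed

end


subsection \<open>The monic orthogonal polynomials\<close>

lemma Phi_Suc_pCons:
  "Phi \<alpha> (Suc n) = pCons 0 (Phi \<alpha> n) - smult (cnj (\<alpha> n)) (pstar (Phi \<alpha> n))"
  by simp

lemma degree_Phi [simp]: "degree (Phi \<alpha> n) = n"
  and coeff_Phi_self [simp]: "coeff (Phi \<alpha> n) n = 1"
proof (induction n)
  case 0
  show "degree (Phi \<alpha> 0) = 0" "coeff (Phi \<alpha> 0) 0 = 1" by simp_all
next
  case (Suc n)
  let ?P = "Phi \<alpha> n"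
  have "degree (smult (cnj (\<alpha> n)) (pstar ?P)) \<le> n"
    using degree_smult_le degree_pstar_le[of ?P] Suc.IH(1) by (metis order_trans)
  moreover have "degree (pCons 0 ?P) = Suc n"
    using Suc.IH by auto
  ultimately show "degree (Phi \<alpha> (Suc n)) = Suc n"
    unfolding Phi_Suc_pCons diff_conv_add_uminus by (subst degree_add_eq_left) auto
  show "coeff (Phi \<alpha> (Suc n)) (Suc n) = 1"
    using Suc.IH by (simp only: Phi_Suc_pCons coeff_diff coeff_smult coeff_pstar) simp
qed

lemma Phi_span_induct:
  assumes "\<And>d. d < m \<Longrightarrow> P (Phi \<alpha> d)" and "P 0"
    and "\<And>c p q. P p \<Longrightarrow> P q \<Longrightarrow> P (smult c p + q)"
    and "\<And>k. m \<le> k \<Longrightarrow> coeff p k = 0"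
  shows "P p"
  using assms(1,4)
proof (induction m arbitrary: p)
  case 0
  then have "p = 0" by (intro poly_eqI) simp
  then show ?case using assms(2) by simp
next
  case (Suc d)
  define q where "q = p - smult (coeff p d) (Phi \<alpha> d)"
  have "P q"
  proof (rule Suc.IH)
    fix k assume "d \<le> k"
    then show "coeff q k = 0"
      using Suc.prems(2)[of k] by (cases "k = d") (auto simp: q_def coeff_eq_0)
  qed (use Suc.prems in simp)
  then have "P (smult (coeff p d) (Phi \<alpha> d) + q)"
    using assms(3) Suc.prems(1) by blast
  then show ?case by (simp add: q_def)
qed

definition Phi_sqnorm :: "((int \<Rightarrow> complex) \<Rightarrow> complex) \<Rightarrow> (nat \<Rightarrow> complex) \<Rightarrow> nat \<Rightarrow> complex" where
  "Phi_sqnorm L \<alpha> n = poly_ip L (Phi \<alpha> n) (Phi \<alpha> n)"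

context
  fixes \<alpha> :: "nat \<Rightarrow> complex" and L :: "(int \<Rightarrow> complex) \<Rightarrow> complex"
  assumes OPUC: "is_OPUC_functional \<alpha> L"
begin

lemma OPUC_lin_functional: "lin_functional L"
  using OPUC unfolding is_OPUC_functional_def by blast

lemma poly_ip_Phi_Phi: "m \<noteq> n \<Longrightarrow> poly_ip L (Phi \<alpha> m) (Phi \<alpha> n) = 0"
  using OPUC unfolding is_OPUC_functional_def lip_def by blast

lemma poly_ip_Phi_low_degree_right:
  assumes "\<And>k. n \<le> k \<Longrightarrow> coeff p k = 0"
  shows "poly_ip L (Phi \<alpha> n) p = 0"
  by (rule Phi_span_induct[where P = "\<lambda>p. poly_ip L (Phi \<alpha> n) p = 0" and \<alpha> = \<alpha> and m = n])
     (use assms in \<open>auto simp: poly_ip_Phi_Phi poly_ip_add_right[OF OPUC_lin_functional]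
        poly_ip_smult_right[OF OPUC_lin_functional] poly_ip_zero_right[OF OPUC_lin_functional]\<close>)

lemma poly_ip_Phi_low_degree_left:
  assumes "\<And>k. n \<le> k \<Longrightarrow> coeff p k = 0"
  shows "poly_ip L p (Phi \<alpha> n) = 0"
  by (rule Phi_span_induct[where P = "\<lambda>p. poly_ip L p (Phi \<alpha> n) = 0" and \<alpha> = \<alpha> and m = n])
     (use assms in \<open>auto simp: poly_ip_Phi_Phi poly_ip_add_left[OF OPUC_lin_functional]
        poly_ip_smult_left[OF OPUC_lin_functional] poly_ip_zero_left[OF OPUC_lin_functional]\<close>)

lemma Phi_sqnorm_eq_poly_ip_monom_right: "Phi_sqnorm L \<alpha> n = poly_ip L (Phi \<alpha> n) (monom 1 n)"
proof -
  have "poly_ip L (Phi \<alpha> n) (Phi \<alpha> n - monom 1 n) = 0"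
    by (rule poly_ip_Phi_low_degree_right) (auto simp: coeff_monom coeff_eq_0)
  then show ?thesis
    unfolding Phi_sqnorm_def by (simp add: poly_ip_diff_right[OF OPUC_lin_functional])
qed

lemma Phi_sqnorm_0: "Phi_sqnorm L \<alpha> 0 = 1"
  using OPUC poly_ip_eq_moment_form[OF OPUC_lin_functional, of 1 1 1]
  unfolding Phi_sqnorm_def is_OPUC_functional_def moment_form_def mom_def by simp

lemma Phi_sqnorm_Suc:
  "Phi_sqnorm L \<alpha> (Suc n) = (1 - complex_of_real ((cmod (\<alpha> n))\<^sup>2)) * Phi_sqnorm L \<alpha> n"
proof -
  note lin = OPUC_lin_functional
  let ?P = "Phi \<alpha> n" and ?a = "\<alpha> n" and ?\<kappa> = "Phi_sqnorm L \<alpha> n"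
  have monom_Suc: "monom (1::complex) (Suc n) = pCons 0 (monom 1 n)"
    by (rule poly_eqI) (auto simp: coeff_monom coeff_pCons split: nat.splits)
  have shift: "poly_ip L (pCons 0 ?P) (monom 1 (Suc n)) = ?\<kappa>"
    by (simp add: monom_Suc poly_ip_pCons_0[OF lin] Phi_sqnorm_eq_poly_ip_monom_right)
  have reflect_left: "poly_ip L (pstar ?P) (monom 1 (Suc n)) = poly_ip L 1 (pCons 0 ?P)"
    using poly_ip_pstar_monom[OF lin, of ?P] by simp
  have reflect_right: "poly_ip L 1 (pstar ?P) = ?\<kappa>"
    using poly_ip_1_pstar[OF lin, of ?P] by (simp add: Phi_sqnorm_eq_poly_ip_monom_right)
  \<comment> \<open>\<open>1 \<perp> \<Phi>\<^sub>n\<^sub>+\<^sub>1\<close> expresses \<open>\<langle>1, z\<Phi>\<^sub>n\<rangle>\<close> through \<open>\<kappa>\<^sub>n\<close>\<close>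
  have "poly_ip L 1 (Phi \<alpha> (Suc n)) = 0"
    by (rule poly_ip_Phi_low_degree_left) (auto simp: coeff_1)
  then have orth: "poly_ip L 1 (pCons 0 ?P) = ?a * ?\<kappa>"
    by (simp add: Phi_Suc_pCons poly_ip_diff_right[OF lin] poly_ip_smult_right[OF lin] reflect_right)
  have "Phi_sqnorm L \<alpha> (Suc n) = poly_ip L (Phi \<alpha> (Suc n)) (monom 1 (Suc n))"
    by (rule Phi_sqnorm_eq_poly_ip_monom_right)
  also have "\<dots> = ?\<kappa> - cnj ?a * (?a * ?\<kappa>)"
    by (simp only: Phi_Suc_pCons poly_ip_diff_left[OF lin] poly_ip_smult_left[OF lin]
        shift reflect_left orth)
  also have "\<dots> = (1 - cnj ?a * ?a) * ?\<kappa>"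
    by (simp add: algebra_simps)
  also have "cnj ?a * ?a = complex_of_real ((cmod ?a)\<^sup>2)"
    using complex_norm_square[of ?a] by (simp add: mult.commute)
  finally show ?thesis .
qed

lemma Phi_sqnorm_eq_prod: "Phi_sqnorm L \<alpha> n = (\<Prod>k<n. 1 - complex_of_real ((cmod (\<alpha> k))\<^sup>2))"
  by (induction n) (simp_all add: Phi_sqnorm_0 Phi_sqnorm_Suc mult.commute)

lemma Phi_sqnorm_nonzero:
  assumes "\<And>k. cmod (\<alpha> k) < 1"
  shows "Phi_sqnorm L \<alpha> n \<noteq> 0"
proof -
  have "(cmod (\<alpha> k))\<^sup>2 < 1" for k
    using assms[of k] by (simp add: power_less_one_iff abs_less_iff)
  then have "complex_of_real ((cmod (\<alpha> k))\<^sup>2) \<noteq> 1" for k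
    by (metis less_irrefl of_real_eq_1_iff)
  then show ?thesis
    unfolding Phi_sqnorm_eq_prod by (simp add: prod_zero_iff)
qed

end


subsection \<open>The determinant identity\<close>

lemma Toeplitz_mult_Phi_coeffs:
  assumes "lin_functional L"
  shows "mat s s (\<lambda>(i, j). mom L (m + int i - int j)) * mat s s (\<lambda>(j, l). coeff (Phi \<alpha> l) j) =
         mat s s (\<lambda>(i, l). lip L (lp_of_poly (Phi \<alpha> l)) (zpow (m + int i)))"
    (is "?T * ?C = ?M")
proof (rule eq_matI)
  fix i l assume "i < dim_row ?M" "l < dim_col ?M"
  then show "(?T * ?C) $$ (i, l) = ?M $$ (i, l)"
    using lip_zpow[OF assms, of "Phi \<alpha> l" s "m + int i"]
    by (simp add: scalar_prod_def atLeast0LessThan mult.commute)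
qed auto

lemma det_upper_unitriangular:
  assumes "A \<in> carrier_mat n n" "upper_triangular A" "\<And>i. i < n \<Longrightarrow> A $$ (i, i) = 1"
  shows "det A = 1"
  using assms by (simp add: det_upper_triangular prod_list_diag_prod)

lemma det_mat_scale_cols:
  fixes f :: "nat \<Rightarrow> nat \<Rightarrow> 'a :: comm_ring_1"
  shows "det (mat n n (\<lambda>(i, j). f i j * d j)) = det (mat n n (\<lambda>(i, j). f i j)) * (\<Prod>j<n. d j)"
proof -
  have "det (mat n n (\<lambda>(i, j). f i j * d j)) =
        (\<Sum>p | p permutes {0..<n}. signof p * (\<Prod>j<n. f (p j) j) * (\<Prod>j<n. d j))"
    by (subst det_col[of _ n]) (auto intro!: sum.cong simp: prod.distrib mult.assoc permutes_in_image)
  also have "\<dots> = det (mat n n (\<lambda>(i, j). f i j)) * (\<Prod>j<n. d j)"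
    by (subst det_col[of _ n]) (auto intro!: sum.cong simp: sum_distrib_right permutes_in_image)
  finally show ?thesis .
qed

lemma prod_lessThan_Suc_triangle:
  "(\<Prod>l<Suc n. \<Prod>k<l. c k) = (\<Prod>k<n. (c k :: 'a :: comm_monoid_mult) ^ (n - k))"
proof (induction n)
  case 0
  then show ?case by simp
next
  case (Suc n)
  have "(\<Prod>l<Suc (Suc n). \<Prod>k<l. c k) = (\<Prod>k<n. c k ^ (n - k) * c k) * c n"
    using Suc by (simp add: prod.distrib mult.assoc)
  also have "(\<Prod>k<n. c k ^ (n - k) * c k) = (\<Prod>k<n. c k ^ (Suc n - k))"
    by (intro prod.cong refl) (simp add: Suc_diff_le mult.commute)
  finally show ?case by simp
qed

theorem proposition2p6:
  fixes \<alpha> :: "nat \<Rightarrow> complex" and L :: "(int \<Rightarrow> complex) \<Rightarrow> complex"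
    and m :: int and n :: nat
  assumes "\<And>k. cmod (\<alpha> k) < 1"
    and "is_OPUC_functional \<alpha> L"
  shows "det (mat (Suc n) (Suc n) (\<lambda>(i, j). mom L (m + int i - int j))) =
         (\<Prod>k<n. (1 - complex_of_real ((cmod (\<alpha> k))\<^sup>2)) ^ (n - k)) *
         det (mat (Suc n) (Suc n) (\<lambda>(i, j). mom2 L \<alpha> (m + int i) j))"
proof -
  let ?T = "mat (Suc n) (Suc n) (\<lambda>(i, j). mom L (m + int i - int j))"
  let ?C = "mat (Suc n) (Suc n) (\<lambda>(j, l). coeff (Phi \<alpha> l) j)"
  let ?\<kappa> = "Phi_sqnorm L \<alpha>"
  have "det ?C = 1"
    by (rule det_upper_unitriangular[of _ "Suc n"]) (auto simp: upper_triangular_def coeff_eq_0)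
  then have "det ?T = det (?T * ?C)"
    by (simp add: det_mult[of _ "Suc n"])
  also have "?T * ?C = mat (Suc n) (Suc n) (\<lambda>(i, l). mom2 L \<alpha> (m + int i) l * ?\<kappa> l)"
    using Phi_sqnorm_nonzero[OF assms(2,1)]
    by (auto simp: Toeplitz_mult_Phi_coeffs OPUC_lin_functional[OF assms(2)] mom2_def Phi_sqnorm_def)
  also have "det \<dots> =
      det (mat (Suc n) (Suc n) (\<lambda>(i, j). mom2 L \<alpha> (m + int i) j)) * (\<Prod>l<Suc n. ?\<kappa> l)"
    by (rule det_mat_scale_cols)
  also have "(\<Prod>l<Suc n. ?\<kappa> l) = (\<Prod>k<n. (1 - complex_of_real ((cmod (\<alpha> k))\<^sup>2)) ^ (n - k))"
    unfolding Phi_sqnorm_eq_prod[OF assms(2)] by (rule prod_lessThan_Suc_triangle)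
  finally show ?thesis
    by (simp add: mult.commute)
qed

end
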